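(* Let $X$ be a separable Banach space with a $1$-norming FMD $(E_j)$. Let $(\mathcal A_m)_{m\in\mathbb N}$ be an increasing sequence of closed subsets of $\mathcal B_\omega$, each closed under taking tails, and let $\mathcal A=\bigcup_{m}\mathcal A_m$. If Player I has a winning strategy for the $\mathcal A$-game, then there is $m\in\mathbb N$ such that Player I has a winning strategy for the $\mathcal A_m$-game.
   Context: FMD: a sequence $(E_k)$ of finite dimensional subspaces of $X$ with biorthogonal $F_k=\{f\in X^*:f|_{E_j}=0\ \forall j\neq k\}$ such that $\mathrm{span}(E_k)$ is dense, $E_k\cap\overline{\mathrm{span}(E_j:j\neq k)}=\{0\}$ and $(F_k)$ is total; $1$-norming means $\sup\{f(x):f\in\mathrm{span}(F_j),\|f\|\le1\}\ge\|x\|$. $c_{00}(E_j)=\mathrm{span}(E_j:j\in\mathbb N)$; $\mathrm{supp}_E(x)$ is the set of $j$ with nonzero $E_j$-component of $x$, and $\mathrm{rg}_E(x)$ the smallest interval containing it. $\mathcal B_\omega$ is the set of infinite block sequences $(x_j)$ in $S_X\cap c_{00}(E_j)$ (i.e. $\max\mathrm{supp}_E(x_j)<\min\mathrm{supp}_E(x_{j+1})$), with the product of the norm topologies; closed refers to this topology. $\mathcal A\subset\mathcal B_\omega$ is closed under taking tails if $(x_{j+n})_{j\in\mathbb N}\in\mathcal A$ whenever $(x_j)\in\mathcal A$ and $n\in\mathbb N$. The $\mathcal A$-game: Player I chooses $k_1\in\mathbb N$, Player II chooses $x_1\in S_X\cap c_{00}(E_j)$ with $\min\mathrm{supp}_E(x_1)\ge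 k_1$; then Player I chooses $k_2>\max\mathrm{rg}_E(x_1)$, Player II chooses $x_2\in S_X\cap c_{00}(E_j)$ with $\min\mathrm{supp}_E(x_2)\ge k_2$, and so on indefinitely. Player I wins if the resulting sequence $(x_j)$ lies in $\mathcal A$. A winning strategy for Player I is a rule assigning to each finite sequence of previous moves of Player II her next legal choice $k_{n+1}$, such that every play following it results in a sequence in $\mathcal A$. *)

theory Defs
  imports "HOL-Analysis.Analysis"
begin

definition separable_space :: "'a::metric_space itself \<Rightarrow> bool" where
  "separable_space _ \<longleftrightarrow> (\<exists>D::'a set. countable D \<and> closure D = UNIV)"

definition Fdual :: "(nat \<Rightarrow> 'a::real_normed_vector set) \<Rightarrow> nat \<Rightarrow> ('a \<Rightarrow> real) set" where
  "Fdual E k = {f. bounded_linear f \<and> (\<forall>j. j \<noteq> k \<longrightarrow> (\<forall>y\<in>E j. f y = 0))}"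

text \<open>Linear span of the union of the F_j inside X* (finite sums of elements of the F_j;
  the F_j are subspaces).\<close>
definition spanF :: "(nat \<Rightarrow> 'a::real_normed_vector set) \<Rightarrow> ('a \<Rightarrow> real) set" where
  "spanF E = {f. \<exists>J c. finite J \<and> (\<forall>j\<in>J. c j \<in> Fdual E j) \<and> f = (\<lambda>x. \<Sum>j\<in>J. c j x)}"

definition is_FMD :: "(nat \<Rightarrow> 'a::real_normed_vector set) \<Rightarrow> bool" where
  "is_FMD E \<longleftrightarrow>
     (\<forall>k. subspace (E k) \<and> (\<exists>B. finite B \<and> B \<subseteq> E k \<and> span B = E k))
   \<and> closure (span (\<Union>k. E k)) = UNIV
   \<and> (\<forall>k. E k \<inter> closure (span (\<Union>j\<in>{j. j \<noteq> k}. E j)) = {0})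
   \<and> (\<forall>x. (\<forall>k. \<forall>f\<in>Fdual E k. f x = 0) \<longrightarrow> x = 0)"

definition one_norming :: "(nat \<Rightarrow> 'a::real_normed_vector set) \<Rightarrow> bool" where
  "one_norming E \<longleftrightarrow> (\<forall>x. Sup {f x | f. f \<in> spanF E \<and> onorm f \<le> 1} \<ge> norm x)"

definition c00 :: "(nat \<Rightarrow> 'a::real_vector set) \<Rightarrow> 'a set" where
  "c00 E = span (\<Union>k. E k)"

text \<open>The (unique, for an FMD) decomposition of x \<in> c00(E_j) into E_j-components.\<close>
definition is_decomp :: "(nat \<Rightarrow> 'a::real_vector set) \<Rightarrow> 'a \<Rightarrow> (nat \<Rightarrow> 'a) \<Rightarrow> bool" where
  "is_decomp E x c \<longleftrightarrow> finite {j. c j \<noteq> 0} \<and> (\<forall>j. c j \<in> E j) \<and> x = (\<Sum>j\<in>{j. c j \<noteq> 0}. c j)"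

definition comp :: "(nat \<Rightarrow> 'a::real_vector set) \<Rightarrow> 'a \<Rightarrow> nat \<Rightarrow> 'a" where
  "comp E x = (THE c. is_decomp E x c)"

definition suppE :: "(nat \<Rightarrow> 'a::real_vector set) \<Rightarrow> 'a \<Rightarrow> nat set" where
  "suppE E x = {j. comp E x j \<noteq> 0}"

definition Bomega :: "(nat \<Rightarrow> 'a::real_normed_vector set) \<Rightarrow> (nat \<Rightarrow> 'a) set" where
  "Bomega E = {x. (\<forall>n. x n \<in> sphere 0 1 \<inter> c00 E) \<and>
      (\<forall>n. \<forall>a\<in>suppE E (x n). \<forall>b\<in>suppE E (x (Suc n)). a < b)}"

definition closed_under_tails :: "(nat \<Rightarrow> 'a) set \<Rightarrow> bool" where
  "closed_under_tails A \<longleftrightarrow> (\<forall>x\<in>A. \<forall>n. (\<lambda>j. x (j + n)) \<in> A)"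

definition legal_move :: "(nat \<Rightarrow> 'a::real_normed_vector set) \<Rightarrow> nat \<Rightarrow> 'a \<Rightarrow> bool" where
  "legal_move E k x \<longleftrightarrow> x \<in> sphere 0 1 \<inter> c00 E \<and> (\<forall>a\<in>suppE E x. k \<le> a)"

text \<open>A strategy for Player I maps the finite list of previous moves of Player II to
  her next choice.  A finite position follows sigma if each move of II was legal.\<close>
definition follows_fin :: "(nat \<Rightarrow> 'a::real_normed_vector set) \<Rightarrow> ('a list \<Rightarrow> nat) \<Rightarrow> 'a list \<Rightarrow> bool" where
  "follows_fin E \<sigma> xs \<longleftrightarrow> (\<forall>i<length xs. legal_move E (\<sigma> (take i xs)) (xs ! i))"

definition follows :: "(nat \<Rightarrow> 'a::real_normed_vector set) \<Rightarrow> ('a list \<Rightarrow> nat) \<Rightarrow> (nat \<Rightarrow> 'a) \<Rightarrow> bool" where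
  "follows E \<sigma> x \<longleftrightarrow> (\<forall>n. legal_move E (\<sigma> (map x [0..<n])) (x n))"

definition legal_strategy :: "(nat \<Rightarrow> 'a::real_normed_vector set) \<Rightarrow> ('a list \<Rightarrow> nat) \<Rightarrow> bool" where
  "legal_strategy E \<sigma> \<longleftrightarrow> (\<forall>xs. xs \<noteq> [] \<and> follows_fin E \<sigma> xs \<longrightarrow>
       (\<forall>a\<in>suppE E (last xs). a < \<sigma> xs))"

definition winning_strategy_I :: "(nat \<Rightarrow> 'a::real_normed_vector set) \<Rightarrow> (nat \<Rightarrow> 'a) set \<Rightarrow> ('a list \<Rightarrow> nat) \<Rightarrow> bool" where
  "winning_strategy_I E A \<sigma> \<longleftrightarrow> legal_strategy E \<sigma> \<and> (\<forall>x. follows E \<sigma> x \<longrightarrow> x \<in> A)"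

end

theory Submission
  imports Defs "HOL-Library.Sublist"
begin

text \<open>Suppose Player I has no winning strategy in any \<open>\<A>\<^sub>m\<close>-game but follows a winning strategy
  \<open>\<sigma>\<close> for the \<open>\<A>\<close>-game. From any finite position played according to \<open>\<sigma>\<close>, Player II can
  continue as in a play that escapes \<open>\<A>\<^sub>m\<close>; since \<open>\<A>\<^sub>m\<close> is closed under tails the whole
  continued play escapes \<open>\<A>\<^sub>m\<close>, and since \<open>\<A>\<^sub>m\<close> is closed some finite stretch of it already
  excludes \<open>\<A>\<^sub>m\<close>. Doing this for \<open>m = 0, 1, 2, \<dots>\<close> in turn yields a single play according to
  \<open>\<sigma>\<close> lying in no \<open>\<A>\<^sub>m\<close>, a contradiction.\<close>

lemma prefix_map_upt: "m \<le> n \<Longrightarrow> prefix (map x [0..<m]) (map x [0..<n])"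
  by (metis le_add_diff_inverse map_append prefixI upt_add_eq_append zero_le)

lemma prefix_nth: "prefix xs ys \<Longrightarrow> i < length xs \<Longrightarrow> ys ! i = xs ! i"
  by (auto simp: prefix_def nth_append)

lemma strict_prefix_chain_length:
  assumes chain: "\<And>m. strict_prefix (P m) (P (Suc m))"
  shows "k \<le> length (P k)"
proof (induction k)
  case (Suc k)
  then show ?case using prefix_length_less[OF chain, of k] by simp
qed simp

lemma strict_prefix_chain_mono:
  assumes chain: "\<And>m. strict_prefix (P m) (P (Suc m))" and "k \<le> l"
  shows "prefix (P k) (P l)"
  using \<open>k \<le> l\<close>
proof (induction rule: dec_induct)
  case (step l)
  then show ?case by (meson chain prefix_order.less_imp_le prefix_order.trans)
qed simp

lemma strict_prefix_chain_limit:
  assumes chain: "\<And>m. strict_prefix (P m) (P (Suc m))"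
  obtains x where "\<And>k. map x [0..<length (P k)] = P k"
proof
  fix k
  define x where "x n = P (Suc n) ! n" for n
  have "x i = P k ! i" if "i < length (P k)" for i
  proof -
    let ?l = "max k (Suc i)"
    have "i < length (P (Suc i))" using strict_prefix_chain_length[of P "Suc i", OF chain] by simp
    then have "P ?l ! i = x i"
      unfolding x_def by (intro prefix_nth strict_prefix_chain_mono[of P, OF chain]) auto
    moreover have "P ?l ! i = P k ! i"
      using that by (intro prefix_nth strict_prefix_chain_mono[of P, OF chain]) auto
    ultimately show ?thesis by simp
  qed
  then show "map x [0..<length (P k)] = P k" by (intro nth_equalityI) auto
qed

lemma tendsto_fun_componentwise:
  fixes Z :: "'n \<Rightarrow> 'i \<Rightarrow> 'b::topological_space"
  shows "(Z \<longlongrightarrow> w) F \<longleftrightarrow> (\<forall>i. ((\<lambda>n. Z n i) \<longlongrightarrow> w i) F)"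
proof -
  have "(Z \<longlongrightarrow> w) F \<longleftrightarrow> limitin (product_topology (\<lambda>i. euclidean) UNIV) Z w F"
    by (simp add: euclidean_product_topology)
  also have "\<dots> \<longleftrightarrow> (\<forall>i. ((\<lambda>n. Z n i) \<longlongrightarrow> w i) F)"
    by (simp add: limitin_componentwise)
  finally show ?thesis .
qed

lemma closedin_separating_prefix:
  fixes A :: "(nat \<Rightarrow> 'b::topological_space) set"
  assumes closed: "closedin (top_of_set B) A" and "w \<in> B" "w \<notin> A"
  obtains N where "\<And>z. z \<in> A \<Longrightarrow> map z [0..<N] \<noteq> map w [0..<N]"
proof (rule ccontr)
  assume "\<not> thesis"
  then have "\<forall>N. \<exists>z\<in>A. map z [0..<N] = map w [0..<N]" using that by blast
  then obtain Z where Z: "\<And>N. Z N \<in> A" "\<And>N. map (Z N) [0..<N] = map w [0..<N]"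
    by metis
  obtain C where C: "closed C" "A = B \<inter> C" using closed closedin_closed by metis
  have "(Z \<longlongrightarrow> w) sequentially"
    unfolding tendsto_fun_componentwise
  proof
    fix i
    have "eventually (\<lambda>N. Z N i = w i) sequentially"
      unfolding eventually_sequentially
    proof (intro exI allI impI)
      fix N assume "Suc i \<le> N"
      then show "Z N i = w i" using Z(2)[of N] by (simp add: map_eq_conv)
    qed
    then show "((\<lambda>N. Z N i) \<longlongrightarrow> w i) sequentially" by (rule tendsto_eventually)
  qed
  then have "w \<in> C" using closed_sequentially[OF C(1)] Z(1) C(2) by blast
  with \<open>w \<in> B\<close> \<open>w \<notin> A\<close> C(2) show False by blast
qed

lemma follows_fin_map_upt:
  "follows_fin E \<sigma> (map x [0..<n]) \<longleftrightarrow> (\<forall>i<n. legal_move E (\<sigma> (map x [0..<i])) (x i))"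
  by (simp add: follows_fin_def take_map)

lemma follows_iff_follows_fin:
  "follows E \<sigma> x \<longleftrightarrow> (\<forall>n. follows_fin E \<sigma> (map x [0..<n]))"
  unfolding follows_def follows_fin_map_upt by (blast intro: lessI)

lemma follows_fin_prefix:
  assumes "follows_fin E \<sigma> ys" "prefix xs ys"
  shows "follows_fin E \<sigma> xs"
  unfolding follows_fin_def
proof (intro allI impI)
  fix i assume i: "i < length xs"
  then have "i < length ys" using prefix_length_le[OF assms(2)] by linarith
  then have "legal_move E (\<sigma> (take i ys)) (ys ! i)" using assms(1) unfolding follows_fin_def by blast
  moreover have "take i ys = take i xs" using assms(2) i by (auto simp: prefix_def)
  ultimately show "legal_move E (\<sigma> (take i xs)) (xs ! i)" by (simp add: prefix_nth[OF assms(2) i])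
qed

lemma follows_fin_append:
  assumes "follows_fin E \<sigma> p" "follows_fin E (\<lambda>ys. \<sigma> (p @ ys)) ys"
  shows "follows_fin E \<sigma> (p @ ys)"
  using assms unfolding follows_fin_def
  by (auto simp: nth_append less_diff_conv2 add.commute[of _ "length p"])

lemma legal_strategy_append:
  assumes "legal_strategy E \<sigma>" "follows_fin E \<sigma> p"
  shows "legal_strategy E (\<lambda>ys. \<sigma> (p @ ys))"
  unfolding legal_strategy_def
proof (intro allI impI ballI)
  fix ys a assume ys: "ys \<noteq> [] \<and> follows_fin E (\<lambda>ys. \<sigma> (p @ ys)) ys"
    and a: "a \<in> suppE E (last ys)"
  have "follows_fin E \<sigma> (p @ ys)" using follows_fin_append assms(2) ys by blast
  with assms(1) a ys show "a < \<sigma> (p @ ys)" unfolding legal_strategy_def by fastforce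
qed

lemma follows_in_Bomega:
  assumes "legal_strategy E \<sigma>" "follows E \<sigma> x"
  shows "x \<in> Bomega E"
  unfolding Bomega_def
proof (intro CollectI conjI allI ballI)
  fix n show "x n \<in> sphere 0 1 \<inter> c00 E"
    using assms(2) by (simp add: follows_def legal_move_def)
next
  fix n a b assume a: "a \<in> suppE E (x n)" and b: "b \<in> suppE E (x (Suc n))"
  let ?xs = "map x [0..<Suc n]"
  have "follows_fin E \<sigma> ?xs" using assms(2) by (simp add: follows_iff_follows_fin del: upt_Suc)
  with assms(1) a have "a < \<sigma> ?xs" unfolding legal_strategy_def by auto
  moreover have "\<sigma> ?xs \<le> b" using assms(2) b unfolding follows_def legal_move_def by blast
  ultimately show "a < b" by simp
qed

definition prepend :: "'a list \<Rightarrow> (nat \<Rightarrow> 'a) \<Rightarrow> nat \<Rightarrow> 'a" where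
  "prepend p y i = (if i < length p then p ! i else y (i - length p))"

lemma map_prepend_upt: "map (prepend p y) [0..<length p + n] = p @ map y [0..<n]"
  by (rule nth_equalityI) (auto simp: prepend_def nth_append)

lemma prepend_shift: "(\<lambda>j. prepend p y (j + length p)) = y"
  by (simp add: prepend_def)

lemma follows_prepend:
  assumes "follows_fin E \<sigma> p" "follows E (\<lambda>ys. \<sigma> (p @ ys)) y"
  shows "follows E \<sigma> (prepend p y)"
  unfolding follows_iff_follows_fin
proof
  fix n
  have "follows_fin E \<sigma> (map (prepend p y) [0..<length p + n])"
    using assms by (simp add: map_prepend_upt follows_fin_append follows_iff_follows_fin)
  then show "follows_fin E \<sigma> (map (prepend p y) [0..<n])"
    by (rule follows_fin_prefix) (simp add: prefix_map_upt)
qed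

text \<open>The play escaping \<open>A\<close> after position \<open>p\<close> comes from the shifted strategy
  \<open>ys \<mapsto> \<sigma> (p @ ys)\<close>, which cannot win for \<open>A\<close> either.\<close>
lemma extend_position_excluding:
  assumes no_win: "\<And>\<tau>. \<not> winning_strategy_I E A \<tau>"
    and legal: "legal_strategy E \<sigma>"
    and tails: "closed_under_tails A"
    and closed: "closedin (top_of_set (Bomega E)) A"
    and p: "follows_fin E \<sigma> p"
  shows "\<exists>q. follows_fin E \<sigma> q \<and> strict_prefix p q \<and> (\<forall>z\<in>A. map z [0..<length q] \<noteq> q)"
proof -
  obtain y where y: "follows E (\<lambda>ys. \<sigma> (p @ ys)) y" "y \<notin> A"
    using no_win legal_strategy_append[OF legal p] unfolding winning_strategy_I_def by blast
  define w where "w = prepend p y"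
  have w_follows: "follows E \<sigma> w" unfolding w_def using follows_prepend[OF p y(1)] .
  have "w \<notin> A"
    using tails y(2) prepend_shift[of p y] unfolding closed_under_tails_def w_def by metis
  then obtain N where N: "\<And>z. z \<in> A \<Longrightarrow> map z [0..<N] \<noteq> map w [0..<N]"
    using closedin_separating_prefix[OF closed follows_in_Bomega[OF legal w_follows]] by blast
  define q where "q = map w [0..<length p + Suc N]"
  have "follows_fin E \<sigma> q"
    using w_follows by (simp add: q_def follows_iff_follows_fin del: upt_Suc)
  moreover have "strict_prefix p q"
    by (simp add: q_def w_def map_prepend_upt strict_prefix_def)
  moreover have "map z [0..<length q] \<noteq> q" if "z \<in> A" for z
  proof
    assume zq: "map z [0..<length q] = q"
    have "map z [0..<N] = take N (map z [0..<length q])"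
      by (simp add: q_def take_map del: upt_Suc)
    also have "\<dots> = take N q" by (simp only: zq)
    also have "\<dots> = map w [0..<N]" by (simp add: q_def take_map del: upt_Suc)
    finally have "map z [0..<N] = map w [0..<N]" .
    with N[OF that] show False by contradiction
  qed
  ultimately show ?thesis by blast
qed

lemma follows_avoiding_all:
  fixes A :: "nat \<Rightarrow> (nat \<Rightarrow> 'a::real_normed_vector) set"
  assumes legal: "legal_strategy E \<sigma>"
    and no_win: "\<And>m \<tau>. \<not> winning_strategy_I E (A m) \<tau>"
    and tails: "\<And>m. closed_under_tails (A m)"
    and closed: "\<And>m. closedin (top_of_set (Bomega E)) (A m)"
  obtains x where "follows E \<sigma> x" "\<And>m. x \<notin> A m"
proof -
  have "\<exists>P. \<forall>m. follows_fin E \<sigma> (P m) \<and> strict_prefix (P m) (P (Suc m)) \<and>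
      (\<forall>z\<in>A m. map z [0..<length (P (Suc m))] \<noteq> P (Suc m))"
  proof (rule dependent_nat_choice[where P = "\<lambda>_. follows_fin E \<sigma>"
        and Q = "\<lambda>m p q. strict_prefix p q \<and> (\<forall>z\<in>A m. map z [0..<length q] \<noteq> q)"])
    have "follows_fin E \<sigma> []" by (simp add: follows_fin_def)
    then show "\<exists>p. follows_fin E \<sigma> p" ..
  next
    fix p m assume "follows_fin E \<sigma> p"
    then show "\<exists>q. follows_fin E \<sigma> q \<and> strict_prefix p q \<and> (\<forall>z\<in>A m. map z [0..<length q] \<noteq> q)"
      by (rule extend_position_excluding[OF no_win legal tails closed])
  qed
  then obtain P where "\<forall>m. follows_fin E \<sigma> (P m) \<and> strict_prefix (P m) (P (Suc m)) \<and>
      (\<forall>z\<in>A m. map z [0..<length (P (Suc m))] \<noteq> P (Suc m))"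
    by blast
  then have P: "\<And>m. follows_fin E \<sigma> (P m)" "\<And>m. strict_prefix (P m) (P (Suc m))"
    "\<And>m. \<forall>z\<in>A m. map z [0..<length (P (Suc m))] \<noteq> P (Suc m)"
    by blast+
  obtain x where x: "\<And>k. map x [0..<length (P k)] = P k"
    using strict_prefix_chain_limit P(2) by blast
  have "follows E \<sigma> x"
    unfolding follows_iff_follows_fin
  proof
    fix n
    have "prefix (map x [0..<n]) (map x [0..<length (P n)])"
      by (rule prefix_map_upt[OF strict_prefix_chain_length[of P, OF P(2)]])
    then have "prefix (map x [0..<n]) (P n)" by (simp only: x)
    then show "follows_fin E \<sigma> (map x [0..<n])" using P(1) follows_fin_prefix by blast
  qed
  moreover have "x \<notin> A m" for m
  proof
    assume "x \<in> A m"
    with P(3) have "map x [0..<length (P (Suc m))] \<noteq> P (Suc m)" by blast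
    with x show False by contradiction
  qed
  ultimately show thesis by (rule that)
qed

theorem proposition6p6:
  fixes E :: "nat \<Rightarrow> 'a::banach set"
    and A :: "nat \<Rightarrow> (nat \<Rightarrow> 'a) set"
  assumes "separable_space TYPE('a)"
    and "is_FMD E"
    and "one_norming E"
    and "\<And>m. A m \<subseteq> Bomega E"
    and "\<And>m. closedin (top_of_set (Bomega E)) (A m)"
    and "\<And>m. closed_under_tails (A m)"
    and "\<And>m. A m \<subseteq> A (Suc m)"
    and "\<exists>\<sigma>. winning_strategy_I E (\<Union>m. A m) \<sigma>"
  shows "\<exists>m. \<exists>\<sigma>. winning_strategy_I E (A m) \<sigma>"
proof (rule ccontr)
  assume "\<not> ?thesis"
  then have no_win: "\<And>m \<tau>. \<not> winning_strategy_I E (A m) \<tau>" by blast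
  obtain \<sigma> where \<sigma>: "winning_strategy_I E (\<Union>m. A m) \<sigma>" using assms(8) by blast
  then have "legal_strategy E \<sigma>" by (simp add: winning_strategy_I_def)
  then obtain x where x: "follows E \<sigma> x" "\<And>m. x \<notin> A m"
    using follows_avoiding_all[where A = A, OF _ no_win assms(6,5)] by blast
  from \<sigma> x(1) have "x \<in> (\<Union>m. A m)" unfolding winning_strategy_I_def by blast
  with x(2) show False by blast
qed

end
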